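(* Let $(M,\Sigma)$ be a measurable space, let $r\ge 1$, and let $\psi_1,\dots,\psi_r\colon\Sigma\to\mathbb{R}$ be non-atomic countably additive charges. Then there exists (and can be obtained by an explicit construction) a strong solution to the fair division problem for $\psi_1,\dots,\psi_r$, i.e. a partition $M=F_1\sqcup\dots\sqcup F_r$ into measurable sets with $\psi_i(F_i)\ge\psi_i(F_j)$ for all $i,j\in\{1,\dots,r\}$.
   Context: A charge is a countably additive real-valued (hence finite) signed measure $\psi\colon\Sigma\to\mathbb{R}$. By the Hahn–Jordan decomposition there is a measurable partition $M=A^+\sqcup A^-$ with $\psi(a)\ge0$ for measurable $a\subseteq A^+$ and $\psi(b)\le 0$ for measurable $b\subseteq A^-$, so $\psi=\mu^+-\mu^-$ where $\mu^\pm$ are the (nonnegative) measures $\mu^+(E)=\psi(E\cap A^+)$, $\mu^-(E)=-\psi(E\cap A^-)$. The charge $\psi$ is called non-atomic if both $\mu^+$ and $\mu^-$ are non-atomic measures. Partition elements are allowed to be empty. *)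

theory Defs
  imports "HOL-Analysis.Analysis"
begin

definition is_charge :: "'a measure \<Rightarrow> ('a set \<Rightarrow> real) \<Rightarrow> bool" where
  "is_charge M \<psi> \<longleftrightarrow>
     (\<forall>A :: nat \<Rightarrow> 'a set. range A \<subseteq> sets M \<longrightarrow> disjoint_family A \<longrightarrow>
        (\<lambda>n. \<psi> (A n)) sums \<psi> (\<Union>n. A n))"

definition is_atom :: "'a measure \<Rightarrow> ('a set \<Rightarrow> real) \<Rightarrow> 'a set \<Rightarrow> bool" where
  "is_atom M \<mu> A \<longleftrightarrow> A \<in> sets M \<and> \<mu> A > 0 \<and>
     (\<forall>B\<in>sets M. B \<subseteq> A \<longrightarrow> \<mu> B = 0 \<or> \<mu> B = \<mu> A)"

definition nonatomic_measure :: "'a measure \<Rightarrow> ('a set \<Rightarrow> real) \<Rightarrow> bool" where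
  "nonatomic_measure M \<mu> \<longleftrightarrow> (\<nexists>A. is_atom M \<mu> A)"

definition hahn_decomposition :: "'a measure \<Rightarrow> ('a set \<Rightarrow> real) \<Rightarrow> 'a set \<Rightarrow> bool" where
  "hahn_decomposition M \<psi> P \<longleftrightarrow> P \<in> sets M \<and>
     (\<forall>a\<in>sets M. a \<subseteq> P \<longrightarrow> \<psi> a \<ge> 0) \<and>
     (\<forall>b\<in>sets M. b \<subseteq> space M - P \<longrightarrow> \<psi> b \<le> 0)"

text \<open>A charge is non-atomic if both Jordan parts mu+ (E) = psi(E \<inter> P),
  mu- (E) = - psi(E - P) (for a Hahn decomposition P) are non-atomic measures.\<close>
definition nonatomic_charge :: "'a measure \<Rightarrow> ('a set \<Rightarrow> real) \<Rightarrow> bool" where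
  "nonatomic_charge M \<psi> \<longleftrightarrow> (\<exists>P. hahn_decomposition M \<psi> P \<and>
     nonatomic_measure M (\<lambda>E. \<psi> (E \<inter> P)) \<and>
     nonatomic_measure M (\<lambda>E. - \<psi> (E \<inter> (space M - P))))"

end

theory Submission
  imports Defs
begin

text \<open>
  Every charge is the difference of its Jordan parts, which are non-atomic finite measures; their
  sum \<open>\<mu>\<close> is a non-atomic finite measure dominating all of them. For finitely many measures
  \<open>\<nu>\<^sub>k \<le> \<mu>\<close> we prove Lyapunov's theorem in the form: every measurable \<open>E\<close> and \<open>t \<in> [0, 1]\<close>
  admit a measurable \<open>F \<subseteq> E\<close> with \<open>\<nu>\<^sub>k F = t \<nu>\<^sub>k E\<close> for all \<open>k\<close>. Splitting off pieces with
  \<open>t = 1/r, 1/(r - 1), \<dots>\<close> gives a partition into \<open>r\<close> sets on which every charge takes the same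
  value, so every participant is indifferent between all pieces.

  Lyapunov's theorem is proved by approximation with fractional sets: a set \<open>G\<close> plus fractions
  \<open>x\<^sub>j\<close> of disjoint pieces \<open>Q\<^sub>j\<close> with the right \<open>\<nu>\<close>-values. Halving every piece (Sierpinski's
  theorem) and then moving the weights to a vertex of the polytope of weights with the same
  \<open>\<nu>\<close>-values keeps at most as many fractional pieces as there are measures, while their size
  halves; the pieces of weight one are added to \<open>G\<close>, and the increasing sets \<open>G\<close> converge to \<open>F\<close>.
\<close>

section \<open>Charges\<close>

lemma charge_empty:
  assumes "is_charge M f"
  shows "f {} = 0"
proof -
  have "(\<lambda>n. f {}) sums f {}"
    using assms unfolding is_charge_def
    by (auto dest!: spec[of _ "\<lambda>n. {}"] simp: disjoint_family_on_def)
  then have "(\<lambda>n. f {}) \<longlonglongrightarrow> 0"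
    using summable_LIMSEQ_zero sums_summable by blast
  then show ?thesis
    by (simp add: LIMSEQ_const_iff)
qed

lemma charge_Un:
  assumes f: "is_charge M f" and AB: "A \<in> sets M" "B \<in> sets M" "A \<inter> B = {}"
  shows "f (A \<union> B) = f A + f B"
proof -
  define X where "X n = (if n = 0 then A else if n = 1 then B else {})" for n :: nat
  have "range X \<subseteq> sets M" "disjoint_family X" "(\<Union>n. X n) = A \<union> B"
    using AB by (auto simp: X_def disjoint_family_on_def split: if_splits)
  then have "(\<lambda>n. f (X n)) sums f (A \<union> B)"
    using f unfolding is_charge_def by metis
  moreover have "(\<lambda>n. f (X n)) sums (\<Sum>n\<in>{0,1}. f (X n))"
    by (rule sums_finite) (auto simp: X_def charge_empty[OF f])
  ultimately show ?thesis
    by (simp add: X_def sums_unique2)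
qed

lemma charge_Diff:
  assumes "is_charge M f" "A \<in> sets M" "B \<in> sets M" "B \<subseteq> A"
  shows "f A = f B + f (A - B)"
proof -
  have "B \<union> (A - B) = A"
    using assms by auto
  then show ?thesis
    using charge_Un[OF assms(1), of B "A - B"] assms by auto
qed

lemma charge_restrict:
  assumes f: "is_charge M f" and S: "S \<in> sets M"
  shows "is_charge M (\<lambda>A. f (A \<inter> S))"
  unfolding is_charge_def
proof (intro allI impI)
  fix A :: "nat \<Rightarrow> 'a set"
  assume "range A \<subseteq> sets M" "disjoint_family A"
  then have "range (\<lambda>n. A n \<inter> S) \<subseteq> sets M" "disjoint_family (\<lambda>n. A n \<inter> S)"
    using S by (auto simp: disjoint_family_on_def)
  then have "(\<lambda>n. f (A n \<inter> S)) sums f (\<Union>n. A n \<inter> S)"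
    using f unfolding is_charge_def by blast
  then show "(\<lambda>n. f (A n \<inter> S)) sums f ((\<Union>n. A n) \<inter> S)"
    by (simp add: Int_UN_distrib2)
qed

lemma charge_uminus:
  assumes "is_charge M f"
  shows "is_charge M (\<lambda>A. - f A)"
  using assms unfolding is_charge_def by (auto intro: sums_minus)

lemma charge_sum:
  assumes "\<And>i. i \<in> I \<Longrightarrow> is_charge M (f i)"
  shows "is_charge M (\<lambda>A. \<Sum>i\<in>I. f i A)"
  using assms unfolding is_charge_def by (auto intro: sums_sum)

definition charge_measure :: "'a measure \<Rightarrow> ('a set \<Rightarrow> real) \<Rightarrow> 'a measure" where
  "charge_measure M f = measure_of (space M) (sets M) (\<lambda>A. ennreal (f A))"

lemma sets_charge_measure [simp]: "sets (charge_measure M f) = sets M"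
  and space_charge_measure [simp]: "space (charge_measure M f) = space M"
  by (simp_all add: charge_measure_def)

context
  fixes M :: "'a measure" and f :: "'a set \<Rightarrow> real"
  assumes charge: "is_charge M f" and nonneg: "\<And>A. A \<in> sets M \<Longrightarrow> 0 \<le> f A"
begin

lemma emeasure_charge_measure:
  assumes "A \<in> sets M"
  shows "emeasure (charge_measure M f) A = ennreal (f A)"
  unfolding charge_measure_def
proof (rule emeasure_measure_of_sigma[OF sets.sigma_algebra_axioms _ _ assms])
  show "positive (sets M) (\<lambda>A. ennreal (f A))"
    by (simp add: positive_def charge_empty[OF charge])
  show "countably_additive (sets M) (\<lambda>A. ennreal (f A))"
    unfolding countably_additive_def
  proof (intro allI impI)
    fix A :: "nat \<Rightarrow> 'a set"
    assume "range A \<subseteq> sets M" "disjoint_family A"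
    then have "(\<lambda>n. ennreal (f (A n))) sums ennreal (f (\<Union>n. A n))"
      using charge nonneg by (subst sums_ennreal) (auto simp: is_charge_def)
    then show "(\<Sum>n. ennreal (f (A n))) = ennreal (f (\<Union>n. A n))"
      by (simp add: sums_iff)
  qed
qed

lemma finite_measure_charge_measure: "finite_measure (charge_measure M f)"
  by (rule finite_measureI) (simp add: emeasure_charge_measure)

lemma measure_charge_measure: "A \<in> sets M \<Longrightarrow> measure (charge_measure M f) A = f A"
  by (simp add: measure_def emeasure_charge_measure nonneg)

end

section \<open>Non-atomic finite measures\<close>

locale nonatomic_finite_measure = finite_measure +
  assumes nonatomic: "A \<in> sets M \<Longrightarrow> 0 < measure M A \<Longrightarrow>
    \<exists>B\<in>sets M. B \<subseteq> A \<and> 0 < measure M B \<and> measure M B < measure M A"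

lemma (in nonatomic_finite_measure) small_subset:
  assumes A: "A \<in> sets M" "0 < measure M A" and e: "0 < e"
  shows "\<exists>B\<in>sets M. B \<subseteq> A \<and> 0 < measure M B \<and> measure M B < e"
proof -
  have "\<exists>B\<in>sets M. B \<subseteq> A \<and> 0 < measure M B \<and> measure M B \<le> measure M A / 2^n" for n
  proof (induction n)
    case 0
    show ?case using A by auto
  next
    case (Suc n)
    then obtain B where B: "B \<in> sets M" "B \<subseteq> A" "0 < measure M B" "measure M B \<le> measure M A / 2^n"
      by blast
    then obtain C where C: "C \<in> sets M" "C \<subseteq> B" "0 < measure M C" "measure M C < measure M B"
      using nonatomic by blast
    have BC: "measure M (B - C) = measure M B - measure M C"
      using B C by (simp add: finite_measure_Diff)
    \<comment> \<open>the smaller of \<open>C\<close> and \<open>B - C\<close> has at most half the mass of \<open>B\<close>\<close>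
    show ?case
    proof (cases "measure M C \<le> measure M B / 2")
      case True
      then show ?thesis using B C by (intro bexI[of _ C]) auto
    next
      case False
      then show ?thesis using B C BC by (intro bexI[of _ "B - C"]) auto
    qed
  qed
  moreover obtain n where "measure M A / e < 2^n"
    using real_arch_pow[of 2 "measure M A / e"] by auto
  then have "measure M A / 2^n < e"
    using e by (simp add: field_simps)
  ultimately show ?thesis
    by (meson order.strict_trans1)
qed

lemma (in finite_measure) greedy_extension:
  assumes A: "A \<in> sets M" and B: "B \<in> sets M" "B \<subseteq> A" "measure M B \<le> s"
  shows "\<exists>B'. (B' \<in> sets M \<and> B' \<subseteq> A \<and> measure M B' \<le> s) \<and> B \<subseteq> B' \<and>
    (\<forall>D\<in>sets M. D \<subseteq> A - B \<longrightarrow> measure M B + measure M D \<le> s \<longrightarrow>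
       measure M D \<le> 2 * (measure M B' - measure M B))"
proof -
  define admissible where "admissible = {C\<in>sets M. C \<subseteq> A - B \<and> measure M B + measure M C \<le> s}"
  define \<sigma> where "\<sigma> = Sup (measure M ` admissible)"
  have empty: "{} \<in> admissible"
    using B by (simp add: admissible_def)
  have bdd: "bdd_above (measure M ` admissible)"
    using A by (intro bdd_aboveI[of _ "measure M A"])
      (auto simp: admissible_def intro!: finite_measure_mono[OF _ A])
  obtain C where C: "C \<in> admissible" "\<sigma> \<le> 2 * measure M C"
  proof (cases "0 < \<sigma>")
    case True
    then obtain C where "C \<in> admissible" "\<sigma> / 2 < measure M C"
      using less_cSup_iff[OF _ bdd, of "\<sigma> / 2"] empty by (auto simp: \<sigma>_def)
    then show ?thesis
      using that by simp
  next
    case False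
    then show ?thesis
      using that[OF empty] by simp
  qed
  have "measure M (B \<union> C) = measure M B + measure M C"
    using B C by (intro finite_measure_Union) (auto simp: admissible_def)
  moreover have "measure M D \<le> 2 * measure M C" if "D \<in> admissible" for D
  proof -
    have "measure M D \<le> \<sigma>"
      unfolding \<sigma>_def using that bdd by (intro cSup_upper) auto
    then show ?thesis
      using C by simp
  qed
  ultimately show ?thesis
    using B C by (intro exI[of _ "B \<union> C"]) (auto simp: admissible_def)
qed

lemma (in nonatomic_finite_measure) exists_subset_measure_eq:
  assumes A: "A \<in> sets M" and s: "0 \<le> s" "s \<le> measure M A"
  shows "\<exists>B\<in>sets M. B \<subseteq> A \<and> measure M B = s"
proof -
  define feasible where "feasible B \<longleftrightarrow> B \<in> sets M \<and> B \<subseteq> A \<and> measure M B \<le> s" for B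
  define greedy where "greedy B B' \<longleftrightarrow> B \<subseteq> B' \<and> (\<forall>D\<in>sets M. D \<subseteq> A - B \<longrightarrow>
    measure M B + measure M D \<le> s \<longrightarrow> measure M D \<le> 2 * (measure M B' - measure M B))" for B B'
  have "\<exists>Bs. \<forall>n. feasible (Bs n) \<and> greedy (Bs n) (Bs (Suc n))"
  proof (rule dependent_nat_choice)
    show "\<exists>B. feasible B"
      using s by (intro exI[of _ "{}"]) (simp add: feasible_def)
  next
    fix B and n :: nat
    assume "feasible B"
    then have B: "B \<in> sets M" "B \<subseteq> A" "measure M B \<le> s"
      by (simp_all add: feasible_def)
    then show "\<exists>B'. feasible B' \<and> greedy B B'"
      unfolding feasible_def greedy_def by (rule greedy_extension[OF A])
  qed
  then obtain Bs where Bs: "\<And>n. Bs n \<in> sets M" "\<And>n. Bs n \<subseteq> A" "\<And>n. measure M (Bs n) \<le> s"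
    and greedy: "\<And>n. greedy (Bs n) (Bs (Suc n))"
    unfolding feasible_def by blast
  define B where "B = (\<Union>n. Bs n)"
  have B: "B \<in> sets M" "B \<subseteq> A"
    using Bs by (auto simp: B_def)
  have "incseq Bs"
    using greedy by (simp add: incseq_SucI greedy_def)
  then have lim: "(\<lambda>n. measure M (Bs n)) \<longlonglongrightarrow> measure M B"
    unfolding B_def using Bs by (intro finite_Lim_measure_incseq) auto
  then have "measure M B \<le> s"
    using Bs by (intro LIMSEQ_le_const2[OF lim]) auto
  have increments: "(\<lambda>n. measure M (Bs (Suc n)) - measure M (Bs n)) \<longlonglongrightarrow> 0"
    using tendsto_diff[OF LIMSEQ_Suc[OF lim] lim] by simp
  have "measure M B = s"
  proof (rule ccontr)
    assume "measure M B \<noteq> s"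
    then have "0 < s - measure M B"
      using \<open>measure M B \<le> s\<close> by simp
    moreover have "0 < measure M (A - B)"
      using A B \<open>measure M B \<le> s\<close> \<open>measure M B \<noteq> s\<close> s by (simp add: finite_measure_Diff)
    ultimately obtain D where D: "D \<in> sets M" "D \<subseteq> A - B" "0 < measure M D"
        "measure M D < s - measure M B"
      using small_subset[of "A - B" "s - measure M B"] A B by auto
    \<comment> \<open>every greedy step could have taken \<open>D\<close>, so the increments cannot tend to zero\<close>
    have "measure M D \<le> 2 * (measure M (Bs (Suc n)) - measure M (Bs n))" for n
    proof -
      have "Bs n \<subseteq> B"
        by (auto simp: B_def)
      then have "D \<subseteq> A - Bs n" "measure M (Bs n) + measure M D \<le> s"
        using B D finite_measure_mono[of "Bs n" B] by auto
      then show ?thesis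
        using greedy[of n] D(1) unfolding greedy_def by blast
    qed
    then have "measure M D \<le> 2 * 0"
      by (intro LIMSEQ_le_const[OF tendsto_mult_left[OF increments]]) auto
    then show False
      using D by simp
  qed
  then show ?thesis
    using B by blast
qed

section \<open>Weights with few fractional entries\<close>

lemma homogeneous_system_nontrivial_solution:
  fixes v :: "'j \<Rightarrow> 'k \<Rightarrow> real"
  assumes "finite K" "finite S" "card K < card S"
  shows "\<exists>c. (\<exists>j\<in>S. c j \<noteq> 0) \<and> (\<forall>k\<in>K. (\<Sum>j\<in>S. c j * v j k) = 0)"
  using assms
proof (induction K arbitrary: S v rule: finite_induct)
  case empty
  then have "S \<noteq> {}"
    by auto
  then show ?case
    by (intro exI[of _ "\<lambda>_. 1"]) auto
next
  case (insert k K)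
  show ?case
  proof (cases "\<exists>j0\<in>S. v j0 k \<noteq> 0")
    case False
    have "card K < card S"
      using insert by simp
    then obtain c where c: "\<exists>j\<in>S. c j \<noteq> 0" "\<forall>k'\<in>K. (\<Sum>j\<in>S. c j * v j k') = 0"
      using insert.IH[of S v] insert.prems(1) by blast
    have "(\<Sum>j\<in>S. c j * v j k) = 0"
      using False by simp
    then show ?thesis
      using c by (intro exI[of _ c]) simp
  next
    case True
    then obtain j0 where j0: "j0 \<in> S" "v j0 k \<noteq> 0" ..
    define S' where "S' = S - {j0}"
    \<comment> \<open>eliminate the unknown \<open>j0\<close> from all equations using equation \<open>k\<close>\<close>
    define w where "w j k' = v j0 k * v j k' - v j k * v j0 k'" for j k'
    have "finite S'" "card K < card S'"
      using insert j0 by (auto simp: S'_def)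
    then obtain c' where c': "\<exists>j\<in>S'. c' j \<noteq> 0" "\<forall>k'\<in>K. (\<Sum>j\<in>S'. c' j * w j k') = 0"
      using insert.IH[of S' w] by blast
    define c where "c j = (if j = j0 then - (\<Sum>i\<in>S'. c' i * v i k) else v j0 k * c' j)" for j
    have eliminated: "(\<Sum>j\<in>S. c j * v j k') = (\<Sum>j\<in>S'. c' j * w j k')" for k'
    proof -
      have "(\<Sum>j\<in>S. c j * v j k') = c j0 * v j0 k' + (\<Sum>j\<in>S'. c j * v j k')"
        unfolding S'_def using insert.prems j0 by (simp add: sum.remove)
      also have "(\<Sum>j\<in>S'. c j * v j k') = (\<Sum>j\<in>S'. v j0 k * c' j * v j k')"
        by (intro sum.cong) (auto simp: c_def S'_def)
      finally show ?thesis
        by (simp add: c_def w_def algebra_simps sum_subtractf sum_distrib_left sum_distrib_right)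
    qed
    have "\<forall>k'\<in>insert k K. (\<Sum>j\<in>S. c j * v j k') = 0"
      using c'(2) by (auto simp: eliminated w_def)
    moreover have "\<exists>j\<in>S. c j \<noteq> 0"
      using c'(1) j0 by (auto simp: c_def S'_def)
    ultimately show ?thesis
      by blast
  qed
qed

definition fractional_indices :: "('j \<Rightarrow> real) \<Rightarrow> 'j set \<Rightarrow> 'j set" where
  "fractional_indices x J = {j\<in>J. 0 < x j \<and> x j < 1}"

lemma sum_weights_split:
  assumes "finite J" "\<forall>j\<in>J. x j \<in> {0..1}"
  shows "(\<Sum>j\<in>J. x j * g j) = (\<Sum>j\<in>{j\<in>J. x j = 1}. g j) + (\<Sum>j\<in>fractional_indices x J. x j * g j)"
proof -
  define I where "I = {j\<in>J. x j = 1}"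
  define F where "F = fractional_indices x J"
  have "I \<subseteq> J" "F \<subseteq> J" "I \<inter> F = {}"
    by (auto simp: I_def F_def fractional_indices_def)
  moreover have "x j = 0" if "j \<in> J - (I \<union> F)" for j
    using that assms(2) by (force simp: I_def F_def fractional_indices_def)
  ultimately have "(\<Sum>j\<in>J. x j * g j) = (\<Sum>j\<in>I \<union> F. x j * g j)"
    using assms(1) by (intro sum.mono_neutral_right) auto
  also have "\<dots> = (\<Sum>j\<in>I. x j * g j) + (\<Sum>j\<in>F. x j * g j)"
    using assms(1) \<open>I \<subseteq> J\<close> \<open>F \<subseteq> J\<close> \<open>I \<inter> F = {}\<close> finite_subset by (intro sum.union_disjoint) auto
  finally show ?thesis
    by (simp add: I_def F_def)
qed

text \<open>The time at which \<open>x + \<tau> * c\<close>, for \<open>\<tau> \<ge> 0\<close>, leaves the unit interval.\<close>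
definition exit_time :: "real \<Rightarrow> real \<Rightarrow> real" where
  "exit_time x c = (if 0 < c then (1 - x) / c else x / - c)"

lemma exit_time_pos: "0 < x \<Longrightarrow> x < 1 \<Longrightarrow> c \<noteq> 0 \<Longrightarrow> 0 < exit_time x c"
  by (auto simp: exit_time_def divide_pos_neg)

lemma before_exit_time:
  assumes "0 \<le> x" "x \<le> 1" "0 \<le> \<tau>" "\<tau> \<le> exit_time x c"
  shows "x + \<tau> * c \<in> {0..1}"
proof (cases "0 < c")
  case True
  then have "\<tau> * c \<le> 1 - x"
    using assms by (simp add: exit_time_def pos_le_divide_eq)
  then show ?thesis
    using assms True by simp
next
  case False
  show ?thesis
  proof (cases "c = 0")
    case False
    then have "0 < - c" "\<tau> \<le> x / - c"
      using assms \<open>\<not> 0 < c\<close> by (simp_all add: exit_time_def)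
    then have "\<tau> * - c \<le> x"
      by (metis pos_le_divide_eq)
    moreover have "\<tau> * c \<le> 0"
      using assms \<open>\<not> 0 < c\<close> by (simp add: mult_nonneg_nonpos)
    ultimately show ?thesis
      using assms by simp
  qed (use assms in simp)
qed

lemma at_exit_time: "c \<noteq> 0 \<Longrightarrow> x + exit_time x c * c \<in> {0, 1}"
  by (auto simp: exit_time_def)

lemma shrink_fractional_indices:
  assumes J: "finite J" and x: "\<forall>j\<in>J. x j \<in> {0..1}"
    and c: "\<exists>j\<in>fractional_indices x J. c j \<noteq> 0" "\<forall>j\<in>J - fractional_indices x J. c j = 0"
  shows "\<exists>\<tau>. (\<forall>j\<in>J. x j + \<tau> * c j \<in> {0..1}) \<and>
    card (fractional_indices (\<lambda>j. x j + \<tau> * c j) J) < card (fractional_indices x J)"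
proof -
  define F where "F = fractional_indices x J"
  define Z where "Z = {j\<in>F. c j \<noteq> 0}"
  \<comment> \<open>move along \<open>c\<close> until the first fractional weight reaches 0 or 1\<close>
  define \<tau> where "\<tau> = Min ((\<lambda>j. exit_time (x j) (c j)) ` Z)"
  have F: "finite F" "F \<subseteq> J"
    using J by (auto simp: F_def fractional_indices_def)
  have Z: "finite Z" "Z \<noteq> {}"
    using F c(1) by (auto simp: Z_def F_def)
  have "\<tau> \<in> (\<lambda>j. exit_time (x j) (c j)) ` Z"
    unfolding \<tau>_def using Z by (intro Min_in) auto
  then obtain j1 where j1: "j1 \<in> Z" "\<tau> = exit_time (x j1) (c j1)"
    by blast
  have \<tau>_le: "\<tau> \<le> exit_time (x j) (c j)" if "j \<in> Z" for j
    using Z that by (simp add: \<tau>_def)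
  have "0 < \<tau>"
    using j1 exit_time_pos by (auto simp: Z_def F_def fractional_indices_def)
  have c_zero: "c j = 0" if "j \<in> J" "j \<notin> Z" for j
    using c(2) that by (auto simp: Z_def F_def)
  have range: "\<forall>j\<in>J. x j + \<tau> * c j \<in> {0..1}"
  proof
    fix j
    assume "j \<in> J"
    then show "x j + \<tau> * c j \<in> {0..1}"
    proof (cases "j \<in> Z")
      case True
      then show ?thesis
        using x \<open>j \<in> J\<close> \<tau>_le[OF True] \<open>0 < \<tau>\<close> by (intro before_exit_time) auto
    qed (use x c_zero in auto)
  qed
  have "fractional_indices (\<lambda>j. x j + \<tau> * c j) J \<subseteq> F - {j1}"
  proof
    fix j
    assume j: "j \<in> fractional_indices (\<lambda>j. x j + \<tau> * c j) J"
    have "j \<in> F"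
      using j c(2) by (cases "j \<in> F") (auto simp: fractional_indices_def F_def)
    moreover have "x j1 + \<tau> * c j1 \<in> {0, 1}"
      using j1 at_exit_time by (auto simp: Z_def)
    ultimately show "j \<in> F - {j1}"
      using j by (auto simp: fractional_indices_def)
  qed
  then have "card (fractional_indices (\<lambda>j. x j + \<tau> * c j) J) \<le> card (F - {j1})"
    using F(1) by (intro card_mono) auto
  also have "\<dots> < card F"
    using F(1) j1(1) by (intro card_Diff1_less) (auto simp: Z_def)
  finally show ?thesis
    using range by (intro exI[of _ \<tau>]) (simp add: F_def)
qed

lemma fewer_fractional_weights:
  fixes v :: "'j \<Rightarrow> 'k \<Rightarrow> real"
  assumes K: "finite K" and J: "finite J" and x: "\<forall>j\<in>J. x j \<in> {0..1}"
    and many: "card K < card (fractional_indices x J)"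
  shows "\<exists>y. (\<forall>j\<in>J. y j \<in> {0..1}) \<and> (\<forall>k\<in>K. (\<Sum>j\<in>J. y j * v j k) = (\<Sum>j\<in>J. x j * v j k)) \<and>
    card (fractional_indices y J) < card (fractional_indices x J)"
proof -
  define F where "F = fractional_indices x J"
  have F: "finite F" "F \<subseteq> J"
    using J by (auto simp: F_def fractional_indices_def)
  obtain c where c: "\<exists>j\<in>F. c j \<noteq> 0" "\<forall>k\<in>K. (\<Sum>j\<in>F. c j * v j k) = 0"
    using homogeneous_system_nontrivial_solution[OF K F(1) many[folded F_def]] by blast
  define c' where "c' j = (if j \<in> F then c j else 0)" for j
  have "\<exists>j\<in>fractional_indices x J. c' j \<noteq> 0" "\<forall>j\<in>J - fractional_indices x J. c' j = 0"
    using c(1) by (auto simp: c'_def F_def)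
  then obtain \<tau> where \<tau>: "\<forall>j\<in>J. x j + \<tau> * c' j \<in> {0..1}"
    "card (fractional_indices (\<lambda>j. x j + \<tau> * c' j) J) < card (fractional_indices x J)"
    using shrink_fractional_indices[OF J x] by blast
  have "(\<Sum>j\<in>J. (x j + \<tau> * c' j) * v j k) = (\<Sum>j\<in>J. x j * v j k)" if "k \<in> K" for k
  proof -
    have "(\<Sum>j\<in>J. c' j * v j k) = (\<Sum>j\<in>F. c j * v j k)"
      unfolding c'_def by (rule sum.mono_neutral_cong_right[OF J F(2)]) auto
    then have "(\<Sum>j\<in>J. c' j * v j k) = 0"
      using c(2) that by simp
    then show ?thesis
      by (simp add: algebra_simps sum.distrib flip: sum_distrib_left)
  qed
  then show ?thesis
    using \<tau> by (intro exI[of _ "\<lambda>j. x j + \<tau> * c' j"]) simp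
qed

lemma few_fractional_weights:
  fixes v :: "'j \<Rightarrow> 'k \<Rightarrow> real"
  assumes K: "finite K" and J: "finite J" and x: "\<forall>j\<in>J. x j \<in> {0..1}"
  shows "\<exists>y. (\<forall>j\<in>J. y j \<in> {0..1}) \<and> (\<forall>k\<in>K. (\<Sum>j\<in>J. y j * v j k) = (\<Sum>j\<in>J. x j * v j k)) \<and>
    card (fractional_indices y J) \<le> card K"
  using x
proof (induction "card (fractional_indices x J)" arbitrary: x rule: less_induct)
  case less
  show ?case
  proof (cases "card (fractional_indices x J) \<le> card K")
    case True
    then show ?thesis
      using less.prems by blast
  next
    case False
    then have "card K < card (fractional_indices x J)"
      by simp
    then obtain y where y: "\<forall>j\<in>J. y j \<in> {0..1}"
      "\<forall>k\<in>K. (\<Sum>j\<in>J. y j * v j k) = (\<Sum>j\<in>J. x j * v j k)"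
      "card (fractional_indices y J) < card (fractional_indices x J)"
      using fewer_fractional_weights[OF K J less.prems] by blast
    then obtain z where z: "\<forall>j\<in>J. z j \<in> {0..1}"
      "\<forall>k\<in>K. (\<Sum>j\<in>J. z j * v j k) = (\<Sum>j\<in>J. y j * v j k)"
      "card (fractional_indices z J) \<le> card K"
      using less.hyps[OF y(3)] by blast
    then show ?thesis
      using y(2) by (intro exI[of _ z]) simp
  qed
qed

section \<open>Lyapunov's theorem for dominated measures\<close>

lemma sum_even_odd_image:
  fixes f :: "nat \<Rightarrow> 'b::comm_monoid_add"
  assumes "finite J"
  shows "(\<Sum>i\<in>(\<lambda>j. 2 * j) ` J \<union> (\<lambda>j. Suc (2 * j)) ` J. f i) = (\<Sum>j\<in>J. f (2 * j) + f (Suc (2 * j)))"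
proof -
  have "(\<lambda>j. 2 * j) ` J \<inter> (\<lambda>j. Suc (2 * j)) ` J = {}"
    by auto presburger
  moreover have "inj_on (\<lambda>j. 2 * j) J" "inj_on (\<lambda>j::nat. Suc (2 * j)) J"
    by (auto simp: inj_on_def)
  ultimately show ?thesis
    using assms by (simp add: sum.union_disjoint sum.reindex sum.distrib)
qed

lemma disjoint_family_on_halves:
  fixes J :: "nat set"
  assumes Q: "disjoint_family_on Q J" and H: "\<And>j. j \<in> J \<Longrightarrow> H j \<subseteq> Q j"
  shows "disjoint_family_on (\<lambda>i. if even i then H (i div 2) else Q (i div 2) - H (i div 2))
    {i. i div 2 \<in> J}"
  unfolding disjoint_family_on_def
proof (intro ballI impI)
  fix i i' :: nat
  assume i: "i \<in> {i. i div 2 \<in> J}" "i' \<in> {i. i div 2 \<in> J}" "i \<noteq> i'"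
  show "(if even i then H (i div 2) else Q (i div 2) - H (i div 2)) \<inter>
      (if even i' then H (i' div 2) else Q (i' div 2) - H (i' div 2)) = {}"
  proof (cases "i div 2 = i' div 2")
    case True
    then have "even i \<noteq> even i'"
      using i(3) by (metis dvd_mult_div_cancel odd_two_times_div_two_succ)
    then show ?thesis
      using True by auto
  next
    case False
    then have "Q (i div 2) \<inter> Q (i' div 2) = {}"
      using i by (intro disjoint_family_onD[OF Q]) auto
    then show ?thesis
      using H i by auto
  qed
qed

locale dominated_family = nonatomic_finite_measure +
  fixes K :: "'k set" and \<nu> :: "'k \<Rightarrow> 'a measure"
  assumes finite_K: "finite K"
    and finite_measure_\<nu>: "k \<in> K \<Longrightarrow> finite_measure (\<nu> k)"
    and sets_\<nu>: "k \<in> K \<Longrightarrow> sets (\<nu> k) = sets M"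
    and measure_\<nu>_le: "k \<in> K \<Longrightarrow> A \<in> sets M \<Longrightarrow> measure (\<nu> k) A \<le> measure M A"
begin

lemma measure_\<nu>_Diff:
  "k \<in> K \<Longrightarrow> A \<in> sets M \<Longrightarrow> B \<in> sets M \<Longrightarrow> B \<subseteq> A \<Longrightarrow>
    measure (\<nu> k) (A - B) = measure (\<nu> k) A - measure (\<nu> k) B"
  using finite_measure.finite_measure_Diff[OF finite_measure_\<nu>] sets_\<nu> by metis

lemma measure_\<nu>_Un:
  "k \<in> K \<Longrightarrow> A \<in> sets M \<Longrightarrow> B \<in> sets M \<Longrightarrow> A \<inter> B = {} \<Longrightarrow>
    measure (\<nu> k) (A \<union> B) = measure (\<nu> k) A + measure (\<nu> k) B"
  using finite_measure.finite_measure_Union[OF finite_measure_\<nu>] sets_\<nu> by metis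

lemma measure_\<nu>_finite_Union:
  "k \<in> K \<Longrightarrow> finite S \<Longrightarrow> A ` S \<subseteq> sets M \<Longrightarrow> disjoint_family_on A S \<Longrightarrow>
    measure (\<nu> k) (\<Union>i\<in>S. A i) = (\<Sum>i\<in>S. measure (\<nu> k) (A i))"
  using finite_measure.finite_measure_finite_Union[OF finite_measure_\<nu>] sets_\<nu> by metis

text \<open>In a fractional split of \<open>E\<close> with target \<open>t\<close> and mesh \<open>\<delta>\<close>, the set \<open>G\<close> is taken completely
  and a fraction \<open>x j\<close> of every piece \<open>Q j\<close>; in total each \<open>\<nu> k\<close> would receive \<open>t * \<nu> k E\<close>.\<close>
definition fractional_split ::
    "'a set \<Rightarrow> real \<Rightarrow> real \<Rightarrow> 'a set \<Rightarrow> nat set \<Rightarrow> (nat \<Rightarrow> 'a set) \<Rightarrow> (nat \<Rightarrow> real) \<Rightarrow> bool" where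
  "fractional_split E t \<delta> G J Q x \<longleftrightarrow> G \<in> sets M \<and> G \<subseteq> E \<and> finite J \<and> disjoint_family_on Q J \<and>
     (\<forall>j\<in>J. Q j \<in> sets M \<and> Q j \<subseteq> E - G \<and> measure M (Q j) \<le> \<delta> \<and> x j \<in> {0..1}) \<and>
     (\<forall>k\<in>K. measure (\<nu> k) G + (\<Sum>j\<in>J. x j * measure (\<nu> k) (Q j)) = t * measure (\<nu> k) E)"

lemma fractional_split_initial:
  assumes "E \<in> sets M" "t \<in> {0..1}"
  shows "fractional_split E t (measure M E) {} {0} (\<lambda>_. E) (\<lambda>_. t)"
  using assms by (simp add: fractional_split_def disjoint_family_on_def)

lemma fractional_split_absorb:
  assumes "fractional_split E t \<delta> G J Q x"
  shows "fractional_split E t \<delta> (G \<union> (\<Union>j\<in>{j\<in>J. x j = 1}. Q j)) (fractional_indices x J) Q x"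
proof -
  define I where "I = {j\<in>J. x j = 1}"
  define J' where "J' = fractional_indices x J"
  define U where "U = (\<Union>j\<in>I. Q j)"
  have G: "G \<in> sets M" "G \<subseteq> E" and J: "finite J" "disjoint_family_on Q J"
    and Q_sets: "\<And>j. j \<in> J \<Longrightarrow> Q j \<in> sets M" and Q_sub: "\<And>j. j \<in> J \<Longrightarrow> Q j \<subseteq> E - G"
    and Q_small: "\<And>j. j \<in> J \<Longrightarrow> measure M (Q j) \<le> \<delta>" and x: "\<And>j. j \<in> J \<Longrightarrow> x j \<in> {0..1}"
    and sums: "\<And>k. k \<in> K \<Longrightarrow> measure (\<nu> k) G + (\<Sum>j\<in>J. x j * measure (\<nu> k) (Q j)) = t * measure (\<nu> k) E"
    using assms unfolding fractional_split_def by blast+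
  have x_range: "\<forall>j\<in>J. x j \<in> {0..1}"
    using x by blast
  have IJ': "I \<subseteq> J" "J' \<subseteq> J" "I \<inter> J' = {}" "finite I" "finite J'"
    using J(1) by (auto simp: I_def J'_def fractional_indices_def)
  have "U \<in> sets M"
    unfolding U_def using IJ' Q_sets by (intro sets.finite_UN) auto
  moreover have "U \<subseteq> E - G"
    unfolding U_def by (intro UN_least Q_sub) (use IJ'(1) in blast)
  ultimately have U: "U \<in> sets M" "U \<subseteq> E - G" .
  have pieces: "Q j \<subseteq> E - (G \<union> U)" if "j \<in> J'" for j
  proof -
    have "j \<in> J" "j \<notin> I"
      using IJ' that by auto
    then have "Q j \<inter> Q i = {}" if "i \<in> I" for i
      using IJ'(1) that by (intro disjoint_family_onD[OF J(2)]) auto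
    then have "Q j \<inter> U = {}"
      by (auto simp: U_def)
    then show ?thesis
      using Q_sub[OF \<open>j \<in> J\<close>] by auto
  qed
  have "measure (\<nu> k) (G \<union> U) + (\<Sum>j\<in>J'. x j * measure (\<nu> k) (Q j)) = t * measure (\<nu> k) E"
    if "k \<in> K" for k
  proof -
    have "disjoint_family_on Q I"
      using J(2) IJ'(1) by (rule disjoint_family_on_mono[rotated])
    then have "measure (\<nu> k) U = (\<Sum>j\<in>I. measure (\<nu> k) (Q j))"
      unfolding U_def using that IJ' Q_sets by (intro measure_\<nu>_finite_Union) auto
    moreover have "G \<inter> U = {}"
      using U by blast
    ultimately have "measure (\<nu> k) (G \<union> U) = measure (\<nu> k) G + (\<Sum>j\<in>I. measure (\<nu> k) (Q j))"
      using that G U by (simp add: measure_\<nu>_Un)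
    then show ?thesis
      using sums[OF that] sum_weights_split[OF J(1) x_range, of "\<lambda>j. measure (\<nu> k) (Q j)"]
      by (simp add: I_def J'_def)
  qed
  moreover have "disjoint_family_on Q J'"
    using J(2) IJ'(2) by (rule disjoint_family_on_mono[rotated])
  moreover have "G \<union> U \<in> sets M" "G \<union> U \<subseteq> E"
    using G U by auto
  ultimately show ?thesis
    using IJ' Q_sets Q_small x pieces
    unfolding fractional_split_def I_def[symmetric] J'_def[symmetric] U_def[symmetric] by auto
qed

lemma fractional_split_round:
  assumes "fractional_split E t \<delta> G J Q x"
  shows "\<exists>G' J' x'. G \<subseteq> G' \<and> card J' \<le> card K \<and> fractional_split E t \<delta> G' J' Q x'"
proof -
  have "finite J" "\<forall>j\<in>J. x j \<in> {0..1}"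
    using assms by (auto simp: fractional_split_def)
  then obtain y where y: "\<forall>j\<in>J. y j \<in> {0..1}"
    "\<forall>k\<in>K. (\<Sum>j\<in>J. y j * measure (\<nu> k) (Q j)) = (\<Sum>j\<in>J. x j * measure (\<nu> k) (Q j))"
    "card (fractional_indices y J) \<le> card K"
    using few_fractional_weights[OF finite_K, where v = "\<lambda>j k. measure (\<nu> k) (Q j)"] by blast
  then have "fractional_split E t \<delta> G J Q y"
    using assms by (simp add: fractional_split_def)
  then have "fractional_split E t \<delta> (G \<union> (\<Union>j\<in>{j\<in>J. y j = 1}. Q j)) (fractional_indices y J) Q y"
    by (rule fractional_split_absorb)
  then show ?thesis
    using y(3) by (intro exI[of _ "G \<union> (\<Union>j\<in>{j\<in>J. y j = 1}. Q j)"] exI[of _ "fractional_indices y J"]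
      exI[of _ y]) simp
qed

lemma fractional_split_halve:
  assumes "fractional_split E t \<delta> G J Q x"
  shows "\<exists>J' Q' x'. fractional_split E t (\<delta> / 2) G J' Q' x'"
proof -
  have G: "G \<in> sets M" "G \<subseteq> E" and J: "finite J" "disjoint_family_on Q J"
    and Q_sets: "\<And>j. j \<in> J \<Longrightarrow> Q j \<in> sets M" and Q_sub: "\<And>j. j \<in> J \<Longrightarrow> Q j \<subseteq> E - G"
    and Q_small: "\<And>j. j \<in> J \<Longrightarrow> measure M (Q j) \<le> \<delta>" and x: "\<And>j. j \<in> J \<Longrightarrow> x j \<in> {0..1}"
    and sums: "\<And>k. k \<in> K \<Longrightarrow> measure (\<nu> k) G + (\<Sum>j\<in>J. x j * measure (\<nu> k) (Q j)) = t * measure (\<nu> k) E"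
    using assms unfolding fractional_split_def by blast+
  have "\<forall>j\<in>J. \<exists>H\<in>sets M. H \<subseteq> Q j \<and> measure M H = measure M (Q j) / 2"
  proof
    fix j
    assume "j \<in> J"
    then show "\<exists>H\<in>sets M. H \<subseteq> Q j \<and> measure M H = measure M (Q j) / 2"
      using Q_sets by (intro exists_subset_measure_eq) auto
  qed
  then obtain H where H: "\<forall>j\<in>J. H j \<in> sets M \<and> H j \<subseteq> Q j \<and> measure M (H j) = measure M (Q j) / 2"
    using bchoice[of J "\<lambda>j H. H \<in> sets M \<and> H \<subseteq> Q j \<and> measure M H = measure M (Q j) / 2"] by blast
  \<comment> \<open>piece \<open>Q j\<close> is replaced by its halves \<open>Q' (2 * j)\<close> and \<open>Q' (2 * j + 1)\<close>, both with weight \<open>x j\<close>\<close>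
  define J' where "J' = (\<lambda>j. 2 * j) ` J \<union> (\<lambda>j. Suc (2 * j)) ` J"
  define Q' where "Q' i = (if even i then H (i div 2) else Q (i div 2) - H (i div 2))" for i
  define x' where "x' i = x (i div 2)" for i
  have J'J: "i div 2 \<in> J" if "i \<in> J'" for i
    using that by (auto simp: J'_def)
  have Q'_sets: "Q' i \<in> sets M" and Q'_sub: "Q' i \<subseteq> Q (i div 2)" if "i \<in> J'" for i
    using H Q_sets J'J[OF that] by (auto simp: Q'_def)
  have Q'_small: "measure M (Q' i) \<le> \<delta> / 2" if "i \<in> J'" for i
  proof -
    have "measure M (Q' i) = measure M (Q (i div 2)) / 2"
      using H Q_sets J'J[OF that] by (auto simp: Q'_def finite_measure_Diff)
    then show ?thesis
      using Q_small J'J[OF that] by simp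
  qed
  have "disjoint_family_on Q' {i. i div 2 \<in> J}"
    unfolding Q'_def using H by (intro disjoint_family_on_halves[OF J(2)]) auto
  then have "disjoint_family_on Q' J'"
    by (rule disjoint_family_on_mono[rotated]) (auto simp: J'_def)
  moreover have "(\<Sum>i\<in>J'. x' i * measure (\<nu> k) (Q' i)) = (\<Sum>j\<in>J. x j * measure (\<nu> k) (Q j))"
    if "k \<in> K" for k
  proof -
    have "measure (\<nu> k) (H j) + measure (\<nu> k) (Q j - H j) = measure (\<nu> k) (Q j)" if "j \<in> J" for j
      using H Q_sets \<open>k \<in> K\<close> that by (simp add: measure_\<nu>_Diff)
    then show ?thesis
      unfolding J'_def using J(1) by (simp add: sum_even_odd_image x'_def Q'_def flip: distrib_left)
  qed
  moreover have "Q' i \<subseteq> E - G" "x' i \<in> {0..1}" if "i \<in> J'" for i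
    using Q'_sub[OF that] Q_sub[OF J'J[OF that]] x[OF J'J[OF that]] by (auto simp: x'_def)
  moreover have "finite J'"
    using J(1) by (simp add: J'_def)
  ultimately have "fractional_split E t (\<delta> / 2) G J' Q' x'"
    using G Q'_sets Q'_small sums unfolding fractional_split_def by simp
  then show ?thesis
    by blast
qed

lemma fractional_split_error:
  assumes "fractional_split E t \<delta> G J Q x" "k \<in> K"
  shows "\<bar>t * measure (\<nu> k) E - measure (\<nu> k) G\<bar> \<le> real (card J) * \<delta>"
proof -
  have Q: "\<And>j. j \<in> J \<Longrightarrow> Q j \<in> sets M \<and> measure M (Q j) \<le> \<delta> \<and> x j \<in> {0..1}"
    and "t * measure (\<nu> k) E - measure (\<nu> k) G = (\<Sum>j\<in>J. x j * measure (\<nu> k) (Q j))"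
    using assms unfolding fractional_split_def by auto
  moreover have "0 \<le> x j * measure (\<nu> k) (Q j) \<and> x j * measure (\<nu> k) (Q j) \<le> \<delta>" if "j \<in> J" for j
  proof -
    have "x j * measure (\<nu> k) (Q j) \<le> measure (\<nu> k) (Q j)"
      using Q[OF that] by (simp add: mult_left_le_one_le)
    also have "\<dots> \<le> \<delta>"
      using Q[OF that] measure_\<nu>_le[OF assms(2)] by (meson order.trans)
    finally show ?thesis
      using Q[OF that] by simp
  qed
  ultimately show ?thesis
    by (simp add: sum_nonneg sum_bounded_above)
qed

lemma fractional_split_chain:
  assumes E: "E \<in> sets M" and t: "t \<in> {0..1}"
  shows "\<exists>Gs. \<forall>n. (\<exists>J Q x. card J \<le> card K \<and> fractional_split E t (measure M E / 2^n) (Gs n) J Q x) \<and>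
    Gs n \<subseteq> Gs (Suc n)"
proof -
  define approx where "approx n G \<longleftrightarrow>
    (\<exists>J Q x. card J \<le> card K \<and> fractional_split E t (measure M E / 2^n) G J Q x)" for n G
  have "\<exists>Gs. \<forall>n. approx n (Gs n) \<and> Gs n \<subseteq> Gs (Suc n)"
  proof (rule dependent_nat_choice)
    obtain G J x where "card J \<le> card K" "fractional_split E t (measure M E) G J (\<lambda>_. E) x"
      using fractional_split_round[OF fractional_split_initial[OF E t]] by blast
    then show "\<exists>G. approx 0 G"
      unfolding approx_def by (intro exI[of _ G] exI[of _ J] exI[of _ "\<lambda>_. E"] exI[of _ x]) simp
  next
    fix G n
    assume "approx n G"
    then obtain J Q x where "fractional_split E t (measure M E / 2^n) G J Q x"
      unfolding approx_def by blast
    then obtain J' Q' x' where halved: "fractional_split E t (measure M E / 2^n / 2) G J' Q' x'"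
      using fractional_split_halve by blast
    obtain G' J'' x'' where "G \<subseteq> G'" "card J'' \<le> card K"
      "fractional_split E t (measure M E / 2^n / 2) G' J'' Q' x''"
      using fractional_split_round[OF halved] by blast
    then show "\<exists>G'. approx (Suc n) G' \<and> G \<subseteq> G'"
      unfolding approx_def
      by (intro exI[of _ G'] conjI exI[of _ J''] exI[of _ Q'] exI[of _ x'']) (simp_all add: mult.commute)
  qed
  then show ?thesis
    unfolding approx_def .
qed

lemma lyapunov:
  assumes E: "E \<in> sets M" and t: "t \<in> {0..1}"
  shows "\<exists>F\<in>sets M. F \<subseteq> E \<and> (\<forall>k\<in>K. measure (\<nu> k) F = t * measure (\<nu> k) E)"
proof -
  obtain Gs where approx: "\<And>n. \<exists>J Q x. card J \<le> card K \<and> fractional_split E t (measure M E / 2^n) (Gs n) J Q x"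
    and inc: "\<And>n. Gs n \<subseteq> Gs (Suc n)"
    using fractional_split_chain[OF E t] by blast
  have "incseq Gs"
    using inc by (rule incseq_SucI)
  have Gs: "Gs n \<in> sets M" "Gs n \<subseteq> E" for n
    using approx[of n] by (auto simp: fractional_split_def)
  define F where "F = (\<Union>n. Gs n)"
  have "measure (\<nu> k) F = t * measure (\<nu> k) E" if k: "k \<in> K" for k
  proof -
    interpret \<nu>: finite_measure "\<nu> k"
      using finite_measure_\<nu>[OF k] .
    have "(\<lambda>n. measure (\<nu> k) (Gs n)) \<longlonglongrightarrow> measure (\<nu> k) F"
      unfolding F_def using Gs sets_\<nu>[OF k] \<open>incseq Gs\<close> by (intro \<nu>.finite_Lim_measure_incseq) auto
    moreover have "(\<lambda>n. measure (\<nu> k) (Gs n)) \<longlonglongrightarrow> t * measure (\<nu> k) E"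
    proof (rule LIM_zero_cancel, rule Lim_null_comparison)
      have "\<bar>t * measure (\<nu> k) E - measure (\<nu> k) (Gs n)\<bar> \<le> card K * (measure M E / 2^n)" for n
      proof -
        obtain J Q x where "card J \<le> card K" "fractional_split E t (measure M E / 2^n) (Gs n) J Q x"
          using approx[of n] by blast
        then have "\<bar>t * measure (\<nu> k) E - measure (\<nu> k) (Gs n)\<bar> \<le> card J * (measure M E / 2^n)"
          using fractional_split_error[OF _ k] by blast
        also have "\<dots> \<le> card K * (measure M E / 2^n)"
          using \<open>card J \<le> card K\<close> by (intro mult_right_mono) auto
        finally show ?thesis .
      qed
      then show "\<forall>\<^sub>F n in sequentially. norm (measure (\<nu> k) (Gs n) - t * measure (\<nu> k) E) \<le>
          card K * (measure M E / 2^n)"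
        by (simp add: abs_minus_commute)
      show "(\<lambda>n. card K * (measure M E / 2^n)) \<longlonglongrightarrow> 0"
        by (intro tendsto_mult_right_zero LIMSEQ_divide_realpow_zero) auto
    qed
    ultimately show ?thesis
      by (rule LIMSEQ_unique)
  qed
  moreover have "F \<in> sets M" "F \<subseteq> E"
    using Gs by (auto simp: F_def)
  ultimately show ?thesis
    by (intro bexI[of _ F]) auto
qed

lemma equal_division:
  fixes m :: nat
  assumes "E \<in> sets M" "0 < m"
  shows "\<exists>F. (\<forall>j<m. F j \<in> sets M) \<and> disjoint_family_on F {..<m} \<and> (\<Union>j<m. F j) = E \<and>
    (\<forall>k\<in>K. \<forall>j<m. measure (\<nu> k) (F j) = measure (\<nu> k) E / m)"
  using assms(2,1)
proof (induction m arbitrary: E rule: nat_induct_non_zero)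
  case 1
  then show ?case
    by (intro exI[of _ "\<lambda>_. E"]) (simp add: disjoint_family_on_def lessThan_Suc)
next
  case (Suc m)
  obtain S where S: "S \<in> sets M" "S \<subseteq> E" "\<forall>k\<in>K. measure (\<nu> k) S = 1 / Suc m * measure (\<nu> k) E"
    using lyapunov[OF Suc.prems, of "1 / Suc m"] by force
  have "E - S \<in> sets M"
    using S Suc.prems by auto
  then obtain F' where F': "\<forall>j<m. F' j \<in> sets M" "disjoint_family_on F' {..<m}" "(\<Union>j<m. F' j) = E - S"
    "\<forall>k\<in>K. \<forall>j<m. measure (\<nu> k) (F' j) = measure (\<nu> k) (E - S) / m"
    using Suc.IH[OF \<open>E - S \<in> sets M\<close>] by blast
  define F where "F = F'(m := S)"
  have "disjoint_family_on F {..<Suc m}"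
    unfolding disjoint_family_on_def
  proof (intro ballI impI)
    fix i j
    assume ij: "i \<in> {..<Suc m}" "j \<in> {..<Suc m}" "i \<noteq> j"
    then consider "i = m" "j < m" | "j = m" "i < m" | "i < m" "j < m"
      by fastforce
    then show "F i \<inter> F j = {}"
      by cases (use F'(2,3) ij(3) in \<open>auto simp: F_def disjoint_family_on_def\<close>)
  qed
  moreover have "(\<Union>j<Suc m. F j) = E"
    using F'(3) S by (auto simp: F_def lessThan_Suc)
  moreover have "measure (\<nu> k) (F j) = measure (\<nu> k) E / Suc m" if "k \<in> K" "j < Suc m" for k j
  proof (cases "j = m")
    case False
    then have "measure (\<nu> k) (F j) = (measure (\<nu> k) E - measure (\<nu> k) E / Suc m) / m"
      using F'(4) S that Suc.prems by (simp add: F_def measure_\<nu>_Diff)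
    also have "measure (\<nu> k) E - measure (\<nu> k) E / Suc m = measure (\<nu> k) E * m / Suc m"
      by (simp add: field_simps)
    finally show ?thesis
      using Suc.hyps by simp
  qed (use S that in \<open>simp add: F_def\<close>)
  moreover have "F j \<in> sets M" if "j < Suc m" for j
    using F'(1) S that by (simp add: F_def)
  ultimately show ?case
    by (intro exI[of _ F]) simp
qed

end

section \<open>Equal division of non-atomic charges\<close>

lemma nonatomic_measure_split:
  assumes charge: "is_charge M f" and nonneg: "\<And>A. A \<in> sets M \<Longrightarrow> 0 \<le> f A"
    and nonatomic: "nonatomic_measure M f" and A: "A \<in> sets M" "0 < f A"
  shows "\<exists>B\<in>sets M. B \<subseteq> A \<and> 0 < f B \<and> 0 < f (A - B)"
proof -
  have "\<not> is_atom M f A"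
    using nonatomic unfolding nonatomic_measure_def by blast
  then have "\<exists>B\<in>sets M. B \<subseteq> A \<and> f B \<noteq> 0 \<and> f B \<noteq> f A"
    using A unfolding is_atom_def by auto
  then obtain B where B: "B \<in> sets M" "B \<subseteq> A" "f B \<noteq> 0" "f B \<noteq> f A"
    by auto
  have "A - B \<in> sets M" "f A = f B + f (A - B)"
    using A(1) B(1) charge_Diff[OF charge A(1) B(1,2)] by auto
  moreover have "0 \<le> f B" "0 \<le> f (A - B)"
    using nonneg B(1) \<open>A - B \<in> sets M\<close> by auto
  ultimately have "0 < f B" "0 < f (A - B)"
    using B(3,4) by linarith+
  then show ?thesis
    using B(1,2) by blast
qed

lemma nonatomic_finite_measure_charge_sum:
  fixes f :: "'k \<Rightarrow> 'a set \<Rightarrow> real"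
  assumes K: "finite K" and charge: "\<And>k. k \<in> K \<Longrightarrow> is_charge M (f k)"
    and nonneg: "\<And>k A. k \<in> K \<Longrightarrow> A \<in> sets M \<Longrightarrow> 0 \<le> f k A"
    and nonatomic: "\<And>k. k \<in> K \<Longrightarrow> nonatomic_measure M (f k)"
  shows "nonatomic_finite_measure (charge_measure M (\<lambda>A. \<Sum>k\<in>K. f k A))"
proof -
  define g where "g A = (\<Sum>k\<in>K. f k A)" for A
  have g: "is_charge M g" "\<And>A. A \<in> sets M \<Longrightarrow> 0 \<le> g A"
    unfolding g_def using charge nonneg by (auto intro: charge_sum sum_nonneg)
  have f_le_g: "f k A \<le> g A" if "k \<in> K" "A \<in> sets M" for k A
    unfolding g_def using K that nonneg by (intro member_le_sum) auto
  have splits: "\<exists>B\<in>sets M. B \<subseteq> A \<and> 0 < g B \<and> g B < g A" if A: "A \<in> sets M" "0 < g A" for A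
  proof -
    have "\<exists>k\<in>K. 0 < f k A"
    proof (rule ccontr)
      assume "\<not> (\<exists>k\<in>K. 0 < f k A)"
      then have "g A \<le> 0"
        unfolding g_def by (intro sum_nonpos) (auto simp: not_less)
      then show False
        using A(2) by simp
    qed
    then obtain k where k: "k \<in> K" "0 < f k A"
      by blast
    then obtain B where B: "B \<in> sets M" "B \<subseteq> A" "0 < f k B" "0 < f k (A - B)"
      using nonatomic_measure_split[OF charge[OF k(1)] nonneg[OF k(1)] nonatomic[OF k(1)] A(1)] by blast
    moreover have "g A = g B + g (A - B)"
      using charge_Diff[OF g(1) A(1) B(1,2)] .
    moreover have "f k (A - B) \<le> g (A - B)"
      using A(1) B(1) k(1) by (intro f_le_g) auto
    ultimately show ?thesis
      using f_le_g[OF k(1) B(1)] by (intro bexI[of _ B]) auto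
  qed
  show ?thesis
    unfolding g_def[symmetric]
  proof (rule nonatomic_finite_measure.intro)
    show "finite_measure (charge_measure M g)"
      by (rule finite_measure_charge_measure[OF g])
    show "nonatomic_finite_measure_axioms (charge_measure M g)"
    proof
      fix A
      assume "A \<in> sets (charge_measure M g)" "0 < measure (charge_measure M g) A"
      then have A: "A \<in> sets M" "0 < g A"
        by (simp_all add: measure_charge_measure[OF g])
      then obtain B where "B \<in> sets M" "B \<subseteq> A" "0 < g B" "g B < g A"
        using splits by auto
      then show "\<exists>B\<in>sets (charge_measure M g). B \<subseteq> A \<and> 0 < measure (charge_measure M g) B \<and>
          measure (charge_measure M g) B < measure (charge_measure M g) A"
        using A(1) by (intro bexI[of _ B]) (simp_all add: measure_charge_measure[OF g])
    qed
  qed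
qed

lemma dominated_family_charge_measure:
  fixes f :: "'k \<Rightarrow> 'a set \<Rightarrow> real"
  assumes K: "finite K" and charge: "\<And>k. k \<in> K \<Longrightarrow> is_charge M (f k)"
    and nonneg: "\<And>k A. k \<in> K \<Longrightarrow> A \<in> sets M \<Longrightarrow> 0 \<le> f k A"
    and nonatomic: "\<And>k. k \<in> K \<Longrightarrow> nonatomic_measure M (f k)"
  shows "dominated_family (charge_measure M (\<lambda>A. \<Sum>k\<in>K. f k A)) K (\<lambda>k. charge_measure M (f k))"
proof (rule dominated_family.intro)
  show "nonatomic_finite_measure (charge_measure M (\<lambda>A. \<Sum>k\<in>K. f k A))"
    using assms by (rule nonatomic_finite_measure_charge_sum)
  have sum: "is_charge M (\<lambda>A. \<Sum>k\<in>K. f k A)" "\<And>A. A \<in> sets M \<Longrightarrow> 0 \<le> (\<Sum>k\<in>K. f k A)"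
    using charge nonneg by (auto intro: charge_sum sum_nonneg)
  show "dominated_family_axioms (charge_measure M (\<lambda>A. \<Sum>k\<in>K. f k A)) K (\<lambda>k. charge_measure M (f k))"
  proof (rule dominated_family_axioms.intro)
    fix k
    assume k: "k \<in> K"
    show "finite_measure (charge_measure M (f k))"
      by (rule finite_measure_charge_measure[OF charge[OF k] nonneg[OF k]])
    fix A
    assume "A \<in> sets (charge_measure M (\<lambda>A. \<Sum>k\<in>K. f k A))"
    then have A: "A \<in> sets M"
      by simp
    have "f k A \<le> (\<Sum>k\<in>K. f k A)"
      using K k A nonneg by (intro member_le_sum) auto
    then show "measure (charge_measure M (f k)) A \<le> measure (charge_measure M (\<lambda>A. \<Sum>k\<in>K. f k A)) A"
      using A by (simp add: measure_charge_measure[OF charge[OF k] nonneg[OF k]] measure_charge_measure[OF sum])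
  qed (simp_all add: K)
qed

lemma nonneg_charges_equal_division:
  fixes f :: "'k \<Rightarrow> 'a set \<Rightarrow> real" and m :: nat
  assumes K: "finite K" and charge: "\<And>k. k \<in> K \<Longrightarrow> is_charge M (f k)"
    and nonneg: "\<And>k A. k \<in> K \<Longrightarrow> A \<in> sets M \<Longrightarrow> 0 \<le> f k A"
    and nonatomic: "\<And>k. k \<in> K \<Longrightarrow> nonatomic_measure M (f k)"
    and m: "0 < m"
  shows "\<exists>F. (\<forall>j<m. F j \<in> sets M) \<and> disjoint_family_on F {..<m} \<and> (\<Union>j<m. F j) = space M \<and>
    (\<forall>k\<in>K. \<forall>j<m. f k (F j) = f k (space M) / m)"
proof -
  interpret dominated_family "charge_measure M (\<lambda>A. \<Sum>k\<in>K. f k A)" K "\<lambda>k. charge_measure M (f k)"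
    using K charge nonneg nonatomic by (rule dominated_family_charge_measure)
  obtain F where F: "\<forall>j<m. F j \<in> sets M" "disjoint_family_on F {..<m}" "(\<Union>j<m. F j) = space M"
    "\<forall>k\<in>K. \<forall>j<m. measure (charge_measure M (f k)) (F j) = measure (charge_measure M (f k)) (space M) / m"
    using equal_division[of "space M" m] m by auto
  have "f k (F j) = f k (space M) / m" if "k \<in> K" "j < m" for k j
    using F(1,4) that charge nonneg by (simp add: measure_charge_measure)
  then show ?thesis
    using F(1-3) by (intro exI[of _ F]) simp
qed

lemma nonatomic_charge_Jordan:
  assumes charge: "is_charge M \<psi>" and nonatomic: "nonatomic_charge M \<psi>"
  shows "\<exists>p n. is_charge M p \<and> is_charge M n \<and> nonatomic_measure M p \<and> nonatomic_measure M n \<and>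
    (\<forall>A\<in>sets M. 0 \<le> p A \<and> 0 \<le> n A \<and> \<psi> A = p A - n A)"
proof -
  obtain P where hahn: "hahn_decomposition M \<psi> P"
    and nonatomic_parts: "nonatomic_measure M (\<lambda>E. \<psi> (E \<inter> P))"
      "nonatomic_measure M (\<lambda>E. - \<psi> (E \<inter> (space M - P)))"
    using nonatomic unfolding nonatomic_charge_def by blast
  have P: "P \<in> sets M" "space M - P \<in> sets M"
    using hahn unfolding hahn_decomposition_def by auto
  have "0 \<le> \<psi> (A \<inter> P) \<and> 0 \<le> - \<psi> (A \<inter> (space M - P)) \<and> \<psi> A = \<psi> (A \<inter> P) - - \<psi> (A \<inter> (space M - P))"
    if "A \<in> sets M" for A
  proof -
    have "A = (A \<inter> P) \<union> (A \<inter> (space M - P))"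
      using sets.sets_into_space[OF that] by blast
    then have "\<psi> A = \<psi> (A \<inter> P) + \<psi> (A \<inter> (space M - P))"
      using that P charge_Un[OF charge, of "A \<inter> P" "A \<inter> (space M - P)"] by auto
    moreover have "0 \<le> \<psi> (A \<inter> P)" "\<psi> (A \<inter> (space M - P)) \<le> 0"
      using hahn that P unfolding hahn_decomposition_def by auto
    ultimately show ?thesis
      by simp
  qed
  moreover have "is_charge M (\<lambda>A. \<psi> (A \<inter> P))" "is_charge M (\<lambda>A. - \<psi> (A \<inter> (space M - P)))"
    using P charge by (auto intro: charge_restrict charge_uminus)
  ultimately show ?thesis
    using nonatomic_parts by blast
qed

lemma nonatomic_charges_equal_division:
  fixes \<psi> :: "'i \<Rightarrow> 'a set \<Rightarrow> real" and m :: nat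
  assumes I: "finite I" and charge: "\<And>i. i \<in> I \<Longrightarrow> is_charge M (\<psi> i)"
    and nonatomic: "\<And>i. i \<in> I \<Longrightarrow> nonatomic_charge M (\<psi> i)" and m: "0 < m"
  shows "\<exists>F. (\<forall>j<m. F j \<in> sets M) \<and> disjoint_family_on F {..<m} \<and> (\<Union>j<m. F j) = space M \<and>
    (\<forall>i\<in>I. \<forall>j<m. \<psi> i (F j) = \<psi> i (space M) / m)"
proof -
  have "\<forall>i\<in>I. \<exists>pn. is_charge M (fst pn) \<and> is_charge M (snd pn) \<and>
    nonatomic_measure M (fst pn) \<and> nonatomic_measure M (snd pn) \<and>
    (\<forall>A\<in>sets M. 0 \<le> fst pn A \<and> 0 \<le> snd pn A \<and> \<psi> i A = fst pn A - snd pn A)"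
    using nonatomic_charge_Jordan[OF charge nonatomic] by simp
  then obtain pn where pn: "\<forall>i\<in>I. is_charge M (fst (pn i)) \<and> is_charge M (snd (pn i)) \<and>
    nonatomic_measure M (fst (pn i)) \<and> nonatomic_measure M (snd (pn i)) \<and>
    (\<forall>A\<in>sets M. 0 \<le> fst (pn i) A \<and> 0 \<le> snd (pn i) A \<and> \<psi> i A = fst (pn i) A - snd (pn i) A)"
    by (rule bchoice[THEN exE])
  \<comment> \<open>one equal division for all Jordan parts, \<open>(i, True)\<close> positive and \<open>(i, False)\<close> negative\<close>
  define f where "f = (\<lambda>(i, b). if b then fst (pn i) else snd (pn i))"
  have f: "is_charge M (f k)" "\<And>A. A \<in> sets M \<Longrightarrow> 0 \<le> f k A" "nonatomic_measure M (f k)"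
    if "k \<in> I \<times> UNIV" for k
    using pn that by (auto simp: f_def)
  have fin: "finite (I \<times> (UNIV :: bool set))"
    using I by simp
  obtain F where F: "\<forall>j<m. F j \<in> sets M" "disjoint_family_on F {..<m}" "(\<Union>j<m. F j) = space M"
    "\<forall>k\<in>I \<times> UNIV. \<forall>j<m. f k (F j) = f k (space M) / m"
    using nonneg_charges_equal_division[where f = f and M = M, OF fin f m] by blast
  have "\<psi> i (F j) = \<psi> i (space M) / m" if "i \<in> I" "j < m" for i j
  proof -
    have "f (i, True) (F j) = f (i, True) (space M) / m" "f (i, False) (F j) = f (i, False) (space M) / m"
      using F(4) that by auto
    then show ?thesis
      using pn F(1) that by (simp add: f_def diff_divide_distrib)
  qed
  then show ?thesis
    using F(1-3) by (intro exI[of _ F]) simp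
qed

theorem theorem1:
  fixes M :: "'a measure" and r :: nat and \<psi> :: "nat \<Rightarrow> 'a set \<Rightarrow> real"
  assumes "r \<ge> 1"
    and "\<And>i. i < r \<Longrightarrow> is_charge M (\<psi> i)"
    and "\<And>i. i < r \<Longrightarrow> nonatomic_charge M (\<psi> i)"
  shows "\<exists>F :: nat \<Rightarrow> 'a set.
           (\<forall>i<r. F i \<in> sets M) \<and>
           (\<forall>i<r. \<forall>j<r. i \<noteq> j \<longrightarrow> F i \<inter> F j = {}) \<and>
           (\<Union>i<r. F i) = space M \<and>
           (\<forall>i<r. \<forall>j<r. \<psi> i (F i) \<ge> \<psi> i (F j))"
proof -
  \<comment> \<open>an exact division, in which every participant values all pieces equally, is in particular fair\<close>
  obtain F where F: "\<forall>j<r. F j \<in> sets M" "disjoint_family_on F {..<r}" "(\<Union>j<r. F j) = space M"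
    "\<forall>i<r. \<forall>j<r. \<psi> i (F j) = \<psi> i (space M) / r"
    using nonatomic_charges_equal_division[where I = "{..<r}" and \<psi> = \<psi> and M = M and m = r] assms
    by auto
  then show ?thesis
    by (intro exI[of _ F]) (auto simp: disjoint_family_on_def)
qed

end
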